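(* Let $\mathcal N$ be a $d$-dimensional real normed space with norm $\|\cdot\|$, let $k\in\mathbb N$, and let $c_1,\dots,c_n$ be $n$ distinct points of $\mathcal N$ with $n\geq k+1$. Then the $k$-th closed sphere-of-influence graph on $\{c_1,\dots,c_n\}$ has at most $(\vartheta(\mathcal N)k-1)\,n\leq(5^dk-1)\,n$ edges.
   Context: For $c\in\mathcal N$ and $r\geq 0$, $B(c,r)=\{x\in\mathcal N:\|x-c\|\leq r\}$ is the closed ball. For each $i\in\{1,\dots,n\}$, let $r_i^{(k)}$ be the smallest $r$ such that the set $\{j\in\{1,\dots,n\}: j\neq i,\ \|c_i-c_j\|\leq r\}$ has at least $k$ elements. The $k$-th closed sphere-of-influence graph on $\{c_1,\dots,c_n\}$ has vertex set $\{c_1,\dots,c_n\}$, and $c_i$, $c_j$ ($i\neq j$) are adjacent whenever $B(c_i,r_i^{(k)})\cap B(c_j,r_j^{(k)})\neq\emptyset$. The quantity $\vartheta(\mathcal N)$ is the largest number of points in the ball $B(o,2)$ ($o$ the origin) such that any two of the points are at distance at least $1$ and one of the points is $o$. *)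

theory Defs
  imports "HOL-Analysis.Analysis"
begin

definition closed_ball :: "'a::real_normed_vector \<Rightarrow> real \<Rightarrow> 'a set" where
  "closed_ball c r = {x. norm (x - c) \<le> r}"

definition soi_radius :: "nat \<Rightarrow> nat \<Rightarrow> (nat \<Rightarrow> 'a::real_normed_vector) \<Rightarrow> nat \<Rightarrow> real" where
  "soi_radius k n c i =
     Inf {r. r \<ge> 0 \<and> card {j \<in> {1..n}. j \<noteq> i \<and> norm (c i - c j) \<le> r} \<ge> k}"

definition soi_adj :: "nat \<Rightarrow> nat \<Rightarrow> (nat \<Rightarrow> 'a::real_normed_vector) \<Rightarrow> nat \<Rightarrow> nat \<Rightarrow> bool" where
  "soi_adj k n c i j \<longleftrightarrow> i \<in> {1..n} \<and> j \<in> {1..n} \<and> i \<noteq> j \<and>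
     closed_ball (c i) (soi_radius k n c i) \<inter> closed_ball (c j) (soi_radius k n c j) \<noteq> {}"

text \<open>Edge set of the k-th closed sphere-of-influence graph (unordered pairs of indices;
  the points are distinct, so this is the edge set on the points).\<close>
definition soi_edges :: "nat \<Rightarrow> nat \<Rightarrow> (nat \<Rightarrow> 'a::real_normed_vector) \<Rightarrow> nat set set" where
  "soi_edges k n c = {{i, j} | i j. soi_adj k n c i j}"

definition theta :: "'a::real_normed_vector itself \<Rightarrow> nat" where
  "theta _ = Sup {card S | S :: 'a set. finite S \<and> 0 \<in> S \<and> S \<subseteq> closed_ball 0 2 \<and>
       (\<forall>x\<in>S. \<forall>y\<in>S. x \<noteq> y \<longrightarrow> norm (x - y) \<ge> 1)}"

end

theory Submission
  imports Defs
begin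

text \<open>Orient every edge towards the endpoint of smaller radius; it suffices that each vertex
  \<open>j\<close> has at most \<open>\<vartheta>k - 1\<close> neighbours \<open>i\<close> with \<open>r\<^sub>i \<ge> r\<^sub>j\<close>. Cover these
  neighbours greedily: take the remaining one of largest radius and discard the fewer than
  \<open>k\<close> points strictly inside its ball. The chosen centres, rescaled by \<open>1/r\<^sub>j\<close> about
  \<open>c\<^sub>j\<close> and retracted radially onto \<open>B(o,2)\<close>, form together with \<open>o\<close> a 1-separated
  set, so there are at most \<open>\<vartheta> - 1\<close> of them. Their balls and the ball of \<open>c\<^sub>j\<close>
  cover \<open>j\<close> and all its upper neighbours, each ball covering at most \<open>k\<close> points including
  its centre. Finally \<open>\<vartheta> \<le> 5\<^sup>d\<close>: the disjoint balls of radius \<open>1/2\<close> about a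
  1-separated subset of \<open>B(o,2)\<close> lie in \<open>B(o,5/2)\<close>, whose volume is \<open>5\<^sup>d\<close> times
  larger; volumes are measured through coordinates in a basis.\<close>

section \<open>Radial retraction onto the ball of radius 2\<close>

definition radial_retract :: "'a::real_normed_vector \<Rightarrow> 'a" where
  "radial_retract v = (if norm v \<le> 2 then v else (2 / norm v) *\<^sub>R v)"

lemma norm_radial_retract_le: "norm (radial_retract v) \<le> 2"
  by (simp add: radial_retract_def)

lemma norm_radial_retract_ge: "1 \<le> norm v \<Longrightarrow> 1 \<le> norm (radial_retract v)"
  by (simp add: radial_retract_def)

lemma one_le_norm_diff_retract_inner_outer:
  fixes y z :: "'a::real_normed_vector"
  assumes "2 < norm z" and "norm z - 1 \<le> norm (y - z)"
  shows "1 \<le> norm (y - (2 / norm z) *\<^sub>R z)"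
proof -
  have "y - (2 / norm z) *\<^sub>R z = (y - z) + (1 - 2 / norm z) *\<^sub>R z"
    by (simp add: algebra_simps)
  then have "norm (y - z) - norm ((1 - 2 / norm z) *\<^sub>R z) \<le> norm (y - (2 / norm z) *\<^sub>R z)"
    by (metis norm_diff_ineq)
  moreover have "0 \<le> 1 - 2 / norm z"
    using assms(1) by (simp add: divide_le_eq)
  then have "norm ((1 - 2 / norm z) *\<^sub>R z) = (1 - 2 / norm z) * norm z"
    by simp
  also have "\<dots> = norm z - 2"
    using assms(1) by (auto simp: field_simps)
  ultimately show ?thesis
    using assms(2) by linarith
qed

lemma one_le_norm_diff_retract_outer_outer:
  fixes y z :: "'a::real_normed_vector"
  assumes "2 < norm y" and "norm y \<le> norm z" and "norm z - 1 \<le> norm (y - z)"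
  shows "1 \<le> norm ((2 / norm y) *\<^sub>R y - (2 / norm z) *\<^sub>R z)"
proof -
  define a b where "a = norm y" and "b = norm z"
  have ab: "2 < a" "a \<le> b" "2 < b"
    using assms unfolding a_def b_def by auto
  then have "2 / b \<le> 2 / a"
    by (simp add: frac_le)
  have "(2 / a) *\<^sub>R y - (2 / b) *\<^sub>R z = (2 / a) *\<^sub>R (y - z) + (2 / a - 2 / b) *\<^sub>R z"
    by (simp add: algebra_simps)
  then have "norm ((2 / a) *\<^sub>R (y - z)) - norm ((2 / a - 2 / b) *\<^sub>R z) \<le> norm ((2 / a) *\<^sub>R y - (2 / b) *\<^sub>R z)"
    by (metis norm_diff_ineq)
  moreover have "norm ((2 / a) *\<^sub>R (y - z)) = (2 / a) * norm (y - z)"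
    using ab by simp
  moreover have "norm ((2 / a - 2 / b) *\<^sub>R z) = (2 / a - 2 / b) * b"
    using \<open>2 / b \<le> 2 / a\<close> unfolding b_def by simp
  moreover have "(2 / a) * (b - 1) \<le> (2 / a) * norm (y - z)"
    using assms(3) ab unfolding a_def b_def by (intro mult_left_mono) auto
  moreover have "(2 / a) * (b - 1) - (2 / a - 2 / b) * b = 2 - 2 / a"
    using ab by (simp add: field_simps)
  moreover have "1 \<le> 2 - 2 / a"
    using ab by (simp add: field_simps)
  ultimately show ?thesis
    unfolding a_def b_def by linarith
qed

lemma radial_retract_separated_ordered:
  fixes y z :: "'a::real_normed_vector"
  assumes "norm y \<le> norm z" and "1 \<le> norm (y - z)" and "norm z - 1 \<le> norm (y - z)"
  shows "1 \<le> norm (radial_retract y - radial_retract z)"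
proof (cases "norm z \<le> 2")
  case True
  then show ?thesis
    using assms by (simp add: radial_retract_def)
next
  case z: False
  show ?thesis
  proof (cases "norm y \<le> 2")
    case True
    then show ?thesis
      using z assms one_le_norm_diff_retract_inner_outer[of z y] by (simp add: radial_retract_def)
  next
    case False
    then show ?thesis
      using z assms one_le_norm_diff_retract_outer_outer[of y z] by (simp add: radial_retract_def)
  qed
qed

lemma radial_retract_separated:
  fixes y z :: "'a::real_normed_vector"
  assumes "1 \<le> norm (y - z)" and "norm y - 1 \<le> norm (y - z)" and "norm z - 1 \<le> norm (y - z)"
  shows "1 \<le> norm (radial_retract y - radial_retract z)"
proof (cases "norm y \<le> norm z")
  case True
  then show ?thesis
    using assms(1,3) by (rule radial_retract_separated_ordered)
next
  case False
  then have "1 \<le> norm (radial_retract z - radial_retract y)"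
    using assms by (intro radial_retract_separated_ordered) (auto simp: norm_minus_commute)
  then show ?thesis
    by (simp add: norm_minus_commute)
qed

lemma radial_retract_rescaled_separated:
  fixes u v :: "'a::real_normed_vector"
  assumes "r > 0" and "r \<le> s" and "r \<le> t" and "norm u \<le> s + r" and "norm v \<le> t + r"
    and "max s t \<le> norm (u - v)"
  shows "1 \<le> norm (radial_retract ((1 / r) *\<^sub>R u) - radial_retract ((1 / r) *\<^sub>R v))"
proof (rule radial_retract_separated)
  have "(1 / r) *\<^sub>R u - (1 / r) *\<^sub>R v = (1 / r) *\<^sub>R (u - v)"
    by (simp add: scaleR_diff_right)
  then have diff: "norm ((1 / r) *\<^sub>R u - (1 / r) *\<^sub>R v) = norm (u - v) / r"
    using assms(1) by simp
  have "norm ((1 / r) *\<^sub>R u) - 1 = (norm u - r) / r" and "norm ((1 / r) *\<^sub>R v) - 1 = (norm v - r) / r"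
    using assms(1) by (simp_all add: diff_divide_distrib)
  then show "1 \<le> norm ((1 / r) *\<^sub>R u - (1 / r) *\<^sub>R v)"
    and "norm ((1 / r) *\<^sub>R u) - 1 \<le> norm ((1 / r) *\<^sub>R u - (1 / r) *\<^sub>R v)"
    and "norm ((1 / r) *\<^sub>R v) - 1 \<le> norm ((1 / r) *\<^sub>R u - (1 / r) *\<^sub>R v)"
    using assms unfolding diff by (simp_all add: le_divide_eq divide_right_mono)
qed

section \<open>Sphere-of-influence radii and the greedy cover\<close>

lemma card_inside_soi_radius_less:
  assumes "k \<ge> 1"
  shows "card {j \<in> {1..n}. j \<noteq> i \<and> norm (c i - c j) < soi_radius k n c i} < k"
proof (rule ccontr)
  define T where "T = {r. r \<ge> 0 \<and> card {j \<in> {1..n}. j \<noteq> i \<and> norm (c i - c j) \<le> r} \<ge> k}"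
  define inside where "inside = {j \<in> {1..n}. j \<noteq> i \<and> norm (c i - c j) < soi_radius k n c i}"
  assume "\<not> card {j \<in> {1..n}. j \<noteq> i \<and> norm (c i - c j) < soi_radius k n c i} < k"
  then have card_inside: "k \<le> card inside"
    unfolding inside_def by simp
  have "finite inside"
    unfolding inside_def by simp
  have "inside \<noteq> {}"
    using card_inside assms by auto
  define \<rho> where "\<rho> = Max ((\<lambda>j. norm (c i - c j)) ` inside)"
  have "\<rho> \<in> (\<lambda>j. norm (c i - c j)) ` inside"
    unfolding \<rho>_def using \<open>finite inside\<close> \<open>inside \<noteq> {}\<close> by (intro Max_in) auto
  then have \<rho>_less: "\<rho> < soi_radius k n c i" and "\<rho> \<ge> 0"
    unfolding inside_def by auto
  have "inside \<subseteq> {j \<in> {1..n}. j \<noteq> i \<and> norm (c i - c j) \<le> \<rho>}"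
    unfolding \<rho>_def using \<open>finite inside\<close> by (auto simp: inside_def intro: Max_ge)
  then have "card inside \<le> card {j \<in> {1..n}. j \<noteq> i \<and> norm (c i - c j) \<le> \<rho>}"
    by (intro card_mono) auto
  then have "\<rho> \<in> T"
    unfolding T_def using card_inside \<open>\<rho> \<ge> 0\<close> by auto
  moreover have "bdd_below T"
    unfolding T_def by (auto intro: bdd_belowI[of _ 0])
  ultimately have "soi_radius k n c i \<le> \<rho>"
    unfolding soi_radius_def T_def[symmetric] by (rule cInf_lower)
  with \<rho>_less show False
    by simp
qed

lemma soi_radius_pos:
  assumes inj: "inj_on c {1..n}" and "k \<ge> 1" and "n \<ge> k + 1" and i: "i \<in> {1..n}"
  shows "0 < soi_radius k n c i"
proof -
  define near where "near r = {j \<in> {1..n}. j \<noteq> i \<and> norm (c i - c j) \<le> r}" for r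
  define T where "T = {r. r \<ge> 0 \<and> card (near r) \<ge> k}"
  define others where "others = {1..n} - {i}"
  have "finite others" and card_others: "card others = n - 1"
    unfolding others_def using i by auto
  then have "others \<noteq> {}"
    using assms by auto
  define \<delta> where "\<delta> = Min ((\<lambda>j. norm (c i - c j)) ` others)"
  have "\<delta> \<in> (\<lambda>j. norm (c i - c j)) ` others"
    unfolding \<delta>_def using \<open>finite others\<close> \<open>others \<noteq> {}\<close> by (intro Min_in) auto
  then obtain j where j: "j \<in> others" and "\<delta> = norm (c i - c j)"
    by blast
  moreover have "c i \<noteq> c j"
    using j inj i unfolding others_def by (auto dest: inj_onD)
  ultimately have "\<delta> > 0"
    by simp
  have \<delta>_le: "\<delta> \<le> norm (c i - c j)" if "j \<in> others" for j
    unfolding \<delta>_def using \<open>finite others\<close> that by (intro Min_le) auto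
  define r0 where "r0 = (\<Sum>j\<in>{1..n}. norm (c i - c j))"
  have "near r0 = others"
    unfolding near_def others_def r0_def by (auto intro: member_le_sum)
  then have "r0 \<in> T"
    unfolding T_def r0_def using card_others assms by (auto intro: sum_nonneg)
  then have "T \<noteq> {}"
    by auto
  moreover have "\<delta> \<le> r" if "r \<in> T" for r
  proof (rule ccontr)
    assume "\<not> \<delta> \<le> r"
    then have "near r = {}"
      using \<delta>_le unfolding near_def others_def by fastforce
    then show False
      using that \<open>k \<ge> 1\<close> unfolding T_def by auto
  qed
  ultimately have "\<delta> \<le> soi_radius k n c i"
    unfolding soi_radius_def near_def[symmetric] T_def[symmetric] by (rule cInf_greatest)
  with \<open>\<delta> > 0\<close> show ?thesis
    by simp
qed

lemma soi_adj_sym: "soi_adj k n c i j \<Longrightarrow> soi_adj k n c j i"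
  unfolding soi_adj_def by auto

lemma soi_adj_norm_le:
  assumes "soi_adj k n c i j"
  shows "norm (c i - c j) \<le> soi_radius k n c i + soi_radius k n c j"
proof -
  obtain x where "norm (x - c i) \<le> soi_radius k n c i" and "norm (x - c j) \<le> soi_radius k n c j"
    using assms unfolding soi_adj_def closed_ball_def by auto
  moreover have "norm (c i - c j) \<le> norm (x - c i) + norm (x - c j)"
    using norm_triangle_ineq4[of "x - c j" "x - c i"] by (simp add: norm_minus_commute)
  ultimately show ?thesis
    by linarith
qed

lemma greedy_separated_cover:
  fixes x :: "'i \<Rightarrow> 'a::real_normed_vector" and \<rho> :: "'i \<Rightarrow> real" and N :: "'i set"
  defines "nbhd \<equiv> \<lambda>p. {q \<in> N. q \<noteq> p \<and> norm (x p - x q) < \<rho> p}"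
  assumes "finite Q" and "Q \<subseteq> N" and "j \<notin> Q"
  shows "\<exists>P\<subseteq>Q. (\<forall>p\<in>P. \<rho> j \<le> norm (x p - x j)) \<and>
     pairwise (\<lambda>p q. max (\<rho> p) (\<rho> q) \<le> norm (x p - x q)) P \<and>
     Q \<subseteq> (\<Union>p\<in>insert j P. insert p (nbhd p))"
  using assms(2-4)
proof (induction Q rule: finite_psubset_induct)
  case (psubset Q)
  show ?case
  proof (cases "Q = {}")
    case True
    then show ?thesis by auto
  next
    case False
    obtain i where i: "i \<in> Q" and i_max: "\<And>q. q \<in> Q \<Longrightarrow> \<rho> q \<le> \<rho> i"
      using Max_in[of "\<rho> ` Q"] Max_ge[of "\<rho> ` Q"] psubset.hyps False by fastforce
    show ?thesis
    proof (cases "norm (x i - x j) < \<rho> j")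
      case True
      obtain P where P: "P \<subseteq> Q - {i}" "\<forall>p\<in>P. \<rho> j \<le> norm (x p - x j)"
        "pairwise (\<lambda>p q. max (\<rho> p) (\<rho> q) \<le> norm (x p - x q)) P"
        "Q - {i} \<subseteq> (\<Union>p\<in>insert j P. insert p (nbhd p))"
        using psubset.IH[of "Q - {i}"] i psubset.prems by blast
      have "i \<in> nbhd j"
        using True i psubset.prems unfolding nbhd_def by (auto simp: norm_minus_commute)
      then show ?thesis
        using P by (intro exI[of _ P]) auto
    next
      case False
      obtain P where P: "P \<subseteq> Q - {i} - nbhd i" "\<forall>p\<in>P. \<rho> j \<le> norm (x p - x j)"
        "pairwise (\<lambda>p q. max (\<rho> p) (\<rho> q) \<le> norm (x p - x q)) P"
        "Q - {i} - nbhd i \<subseteq> (\<Union>p\<in>insert j P. insert p (nbhd p))"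
        using psubset.IH[of "Q - {i} - nbhd i"] i psubset.prems by blast
      have "max (\<rho> i) (\<rho> p) \<le> norm (x i - x p)" if "p \<in> P" for p
      proof -
        have "p \<in> Q" "p \<noteq> i" "p \<notin> nbhd i"
          using P(1) that by auto
        then have "\<rho> i \<le> norm (x i - x p)"
          using psubset.prems unfolding nbhd_def by auto
        moreover have "\<rho> p \<le> \<rho> i"
          using i_max \<open>p \<in> Q\<close> by simp
        ultimately show ?thesis
          by simp
      qed
      then have "pairwise (\<lambda>p q. max (\<rho> p) (\<rho> q) \<le> norm (x p - x q)) (insert i P)"
        using P(3) by (auto simp: pairwise_insert max.commute norm_minus_commute)
      moreover have "insert i P \<subseteq> Q" and "\<forall>p\<in>insert i P. \<rho> j \<le> norm (x p - x j)"
        using P(1,2) i False by auto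
      moreover have "Q \<subseteq> (\<Union>p\<in>insert j (insert i P). insert p (nbhd p))"
        using P(4) by auto
      ultimately show ?thesis
        by blast
    qed
  qed
qed

definition soi_up_neighbours :: "nat \<Rightarrow> nat \<Rightarrow> (nat \<Rightarrow> 'a::real_normed_vector) \<Rightarrow> nat \<Rightarrow> nat set" where
  "soi_up_neighbours k n c j = {i \<in> {1..n}. soi_radius k n c j \<le> soi_radius k n c i \<and> soi_adj k n c i j}"

lemma card_soi_edges_le_sum:
  "card (soi_edges k n c) \<le> (\<Sum>j\<in>{1..n}. card (soi_up_neighbours k n c j))"
proof -
  have "soi_edges k n c \<subseteq> (\<Union>j\<in>{1..n}. (\<lambda>i. {i, j}) ` soi_up_neighbours k n c j)"
  proof
    fix e assume "e \<in> soi_edges k n c"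
    then obtain i j where e: "e = {i, j}" and adj: "soi_adj k n c i j"
      unfolding soi_edges_def by blast
    then have ij: "i \<in> {1..n}" "j \<in> {1..n}"
      unfolding soi_adj_def by auto
    show "e \<in> (\<Union>j\<in>{1..n}. (\<lambda>i. {i, j}) ` soi_up_neighbours k n c j)"
    proof (cases "soi_radius k n c j \<le> soi_radius k n c i")
      case True
      then have "i \<in> soi_up_neighbours k n c j"
        using adj ij unfolding soi_up_neighbours_def by auto
      then show ?thesis
        using ij e by blast
    next
      case False
      then have "j \<in> soi_up_neighbours k n c i"
        using soi_adj_sym[OF adj] ij unfolding soi_up_neighbours_def by auto
      moreover have "e = {j, i}"
        using e by (simp add: insert_commute)
      ultimately show ?thesis
        using ij by blast
    qed
  qed
  then have "card (soi_edges k n c) \<le> card (\<Union>j\<in>{1..n}. (\<lambda>i. {i, j}) ` soi_up_neighbours k n c j)"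
    by (intro card_mono) (auto simp: soi_up_neighbours_def)
  also have "\<dots> \<le> (\<Sum>j\<in>{1..n}. card ((\<lambda>i. {i, j}) ` soi_up_neighbours k n c j))"
    by (rule card_UN_le) simp
  also have "\<dots> \<le> (\<Sum>j\<in>{1..n}. card (soi_up_neighbours k n c j))"
    by (intro sum_mono card_image_le) (simp add: soi_up_neighbours_def)
  finally show ?thesis .
qed

section \<open>The packing constant and volumes in coordinates\<close>

definition theta_configs :: "'a::real_normed_vector set set" where
  "theta_configs = {S. finite S \<and> 0 \<in> S \<and> S \<subseteq> closed_ball 0 2 \<and>
     (\<forall>x\<in>S. \<forall>y\<in>S. x \<noteq> y \<longrightarrow> 1 \<le> norm (x - y))}"

lemma theta_eq_Sup: "theta TYPE('a) = Sup (card ` (theta_configs :: 'a::real_normed_vector set set))"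
  unfolding theta_def theta_configs_def by (intro arg_cong[where f = Sup]) auto

lemma zero_in_theta_configs: "{0} \<in> theta_configs"
  by (simp add: theta_configs_def closed_ball_def)

interpretation lborel_product: product_sigma_finite "\<lambda>_. lborel :: real measure"
  by standard

lemma emeasure_lborel_affine_vimage:
  fixes a c :: real
  assumes c: "c > 0" and A: "A \<in> sets borel"
  shows "emeasure lborel A = ennreal c * emeasure lborel ((\<lambda>y. a + c * y) -` A)"
proof -
  have [measurable]: "(\<lambda>y. a + c * y) \<in> borel_measurable borel" by measurable
  have "emeasure lborel A = emeasure (density (distr lborel borel (\<lambda>y. a + c * y)) (\<lambda>_. ennreal c)) A"
    using lborel_real_affine[of c a] c by simp
  also have "\<dots> = ennreal c * emeasure (distr lborel borel (\<lambda>y. a + c * y)) A"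
    using A by (simp add: emeasure_density nn_integral_cmult_indicator mult.commute)
  also have "\<dots> = ennreal c * emeasure lborel ((\<lambda>y. a + c * y) -` A)"
    using A by (simp add: emeasure_distr)
  finally show ?thesis .
qed

lemma emeasure_PiM_lborel_affine_vimage:
  fixes I :: "'i set" and c :: real and \<alpha> :: "'i \<Rightarrow> real"
  defines "P \<equiv> PiM I (\<lambda>_. lborel)"
  assumes I: "finite I" and c: "c > 0" and X: "X \<in> sets P"
  shows "emeasure P X = ennreal (c ^ card I) *
      emeasure P ((\<lambda>x. \<lambda>i\<in>I. \<alpha> i + c * x i) -` X \<inter> space P)"
proof -
  define \<phi> where "\<phi> = (\<lambda>x. \<lambda>i\<in>I. \<alpha> i + c * x i)"
  have \<phi>: "\<phi> \<in> measurable P P"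
    unfolding \<phi>_def P_def by measurable
  have "scale_measure (ennreal (c ^ card I)) (distr P P \<phi>) = P"
    unfolding P_def
  proof (rule lborel_product.PiM_eqI[OF I])
    fix A assume A: "\<And>i. i \<in> I \<Longrightarrow> A i \<in> sets (lborel :: real measure)"
    have "\<phi> -` Pi\<^sub>E I A \<inter> space P = Pi\<^sub>E I (\<lambda>i. (\<lambda>y. \<alpha> i + c * y) -` A i)"
      unfolding \<phi>_def P_def by (auto simp: space_PiM PiE_def Pi_def extensional_def)
    moreover have "(\<lambda>y. \<alpha> i + c * y) -` A i \<in> sets borel" if "i \<in> I" for i
      using measurable_sets_borel[of "\<lambda>y. \<alpha> i + c * y" borel "A i"] A[OF that] by simp
    ultimately have "emeasure (distr P P \<phi>) (Pi\<^sub>E I A)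
        = (\<Prod>i\<in>I. emeasure lborel ((\<lambda>y. \<alpha> i + c * y) -` A i))"
      using A \<phi> by (simp add: emeasure_distr sets_PiM_I_finite I P_def lborel_product.emeasure_PiM)
    then have "ennreal (c ^ card I) * emeasure (distr P P \<phi>) (Pi\<^sub>E I A)
        = (\<Prod>i\<in>I. ennreal c * emeasure lborel ((\<lambda>y. \<alpha> i + c * y) -` A i))"
      using c by (simp add: prod.distrib ennreal_power)
    also have "\<dots> = (\<Prod>i\<in>I. emeasure lborel (A i))"
      using A c by (intro prod.cong refl emeasure_lborel_affine_vimage[symmetric]) auto
    finally show "emeasure (scale_measure (ennreal (c ^ card I)) (distr (Pi\<^sub>M I (\<lambda>_. lborel))
        (Pi\<^sub>M I (\<lambda>_. lborel)) \<phi>)) (Pi\<^sub>E I A) = (\<Prod>i\<in>I. emeasure lborel (A i))"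
      by (simp add: P_def)
  qed simp
  then have "emeasure P X = ennreal (c ^ card I) * emeasure (distr P P \<phi>) X"
    by (metis emeasure_scale_measure)
  then show ?thesis
    using X \<phi> by (simp add: emeasure_distr \<phi>_def)
qed

lemma l1_unit_sphere_convergent_subseq:
  fixes y :: "nat \<Rightarrow> nat \<Rightarrow> real"
  assumes y: "\<And>k. (\<Sum>i<d. \<bar>y k i\<bar>) = 1"
  obtains r l where "strict_mono r" and "(\<Sum>i<d. \<bar>l i\<bar>) = 1"
    and "\<And>i. i < d \<Longrightarrow> (\<lambda>n. y (r n) i) \<longlonglongrightarrow> l i"
proof -
  have bounded: "bounded ((\<lambda>x. x i) ` range y)" if "i \<in> {..<d}" for i
  proof -
    have "\<bar>y k i\<bar> \<le> 1" for k
      using y[of k] member_le_sum[of i "{..<d}" "\<lambda>i. \<bar>y k i\<bar>"] that by auto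
    then show ?thesis
      unfolding bounded_iff by auto
  qed
  have "\<forall>\<delta>\<subseteq>{..<d}. \<exists>l::nat\<Rightarrow>real. \<exists>r. strict_mono r \<and>
      (\<forall>\<epsilon>>0. eventually (\<lambda>n. \<forall>i\<in>\<delta>. dist (y (r n) i) (l i) < \<epsilon>) sequentially)"
    by (rule compact_lemma_general[where unproj = "\<lambda>x. x" and proj = "\<lambda>x i. x i"])
      (use bounded in auto)
  then obtain l r where r: "strict_mono r"
    and conv: "\<And>\<epsilon>. \<epsilon> > 0 \<Longrightarrow> eventually (\<lambda>n. \<forall>i\<in>{..<d}. dist (y (r n) i) (l i) < \<epsilon>) sequentially"
    by blast
  have lim: "(\<lambda>n. y (r n) i) \<longlonglongrightarrow> l i" if "i < d" for i
    unfolding tendsto_iff using that by (auto intro: eventually_mono[OF conv])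
  have "(\<lambda>n. \<Sum>i<d. \<bar>y (r n) i\<bar>) \<longlonglongrightarrow> (\<Sum>i<d. \<bar>l i\<bar>)"
    by (intro tendsto_sum tendsto_rabs lim) auto
  then have "(\<Sum>i<d. \<bar>l i\<bar>) = 1"
    using y by (simp add: LIMSEQ_const_iff)
  with r lim show ?thesis
    using that by blast
qed

locale coordinates =
  fixes b :: "nat \<Rightarrow> 'a::real_normed_vector" and d :: nat
  assumes coords_unique: "\<And>x. (\<Sum>i<d. x i *\<^sub>R b i) = 0 \<Longrightarrow> \<forall>i<d. x i = 0"
    and coords_exist: "\<And>v. \<exists>x. v = (\<Sum>i<d. x i *\<^sub>R b i)"
begin

definition comb :: "(nat \<Rightarrow> real) \<Rightarrow> 'a" where
  "comb x = (\<Sum>i<d. x i *\<^sub>R b i)"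

abbreviation coord_space :: "(nat \<Rightarrow> real) measure" where
  "coord_space \<equiv> PiM {..<d} (\<lambda>_. lborel)"

definition coord_ball :: "'a \<Rightarrow> real \<Rightarrow> (nat \<Rightarrow> real) set" where
  "coord_ball a r = {x \<in> space coord_space. norm (comb x - a) < r}"

lemma comb_small_on_l1_sphere:
  assumes "\<forall>m>0. \<exists>x. norm (comb x) < m * (\<Sum>i<d. \<bar>x i\<bar>)" and "\<epsilon> > 0"
  obtains y where "(\<Sum>i<d. \<bar>y i\<bar>) = 1" and "norm (comb y) < \<epsilon>"
proof -
  obtain x where x: "norm (comb x) < \<epsilon> * (\<Sum>i<d. \<bar>x i\<bar>)"
    using assms by blast
  define s where "s = (\<Sum>i<d. \<bar>x i\<bar>)"
  have "0 < \<epsilon> * s"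
    using x unfolding s_def by (meson norm_ge_zero le_less_trans)
  then have s: "s > 0"
    using assms(2) by (rule zero_less_mult_pos)
  have "(\<Sum>i<d. \<bar>x i / s\<bar>) = (\<Sum>i<d. \<bar>x i\<bar>) / s"
    using s by (simp add: sum_divide_distrib)
  then have "(\<Sum>i<d. \<bar>x i / s\<bar>) = 1"
    using s by (simp add: s_def)
  moreover have "comb (\<lambda>i. x i / s) = (1 / s) *\<^sub>R comb x"
    by (simp add: comb_def scaleR_sum_right)
  then have "norm (comb (\<lambda>i. x i / s)) < \<epsilon>"
    using x s by (simp add: s_def divide_less_eq)
  ultimately show ?thesis
    by (rule that)
qed

lemma comb_bounded_below: "\<exists>m>0. \<forall>x. m * (\<Sum>i<d. \<bar>x i\<bar>) \<le> norm (comb x)"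
proof (rule ccontr)
  assume "\<not> ?thesis"
  then have small: "\<forall>m>0. \<exists>x. norm (comb x) < m * (\<Sum>i<d. \<bar>x i\<bar>)"
    by (meson not_le)
  have approx: "\<forall>k. \<exists>y. (\<Sum>i<d. \<bar>y i\<bar>) = 1 \<and> norm (comb y) < 1 / (real k + 1)"
  proof
    fix k :: nat
    have "(0::real) < 1 / (real k + 1)" by simp
    from comb_small_on_l1_sphere[OF small this] show "\<exists>y. (\<Sum>i<d. \<bar>y i\<bar>) = 1 \<and> norm (comb y) < 1 / (real k + 1)"
      by blast
  qed
  obtain y where y: "\<forall>k. (\<Sum>i<d. \<bar>y k i\<bar>) = 1 \<and> norm (comb (y k)) < 1 / (real k + 1)"
    using choice[OF approx] by blast
  have y1: "\<And>k. (\<Sum>i<d. \<bar>y k i\<bar>) = 1" and y2: "\<And>k. norm (comb (y k)) < 1 / (real k + 1)"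
    using y by auto
  obtain r l where r: "strict_mono r" and l1: "(\<Sum>i<d. \<bar>l i\<bar>) = 1"
    and lim: "\<And>i. i < d \<Longrightarrow> (\<lambda>n. y (r n) i) \<longlonglongrightarrow> l i"
    using l1_unit_sphere_convergent_subseq[of y d, OF y1] by blast
  have "(\<lambda>n. comb (y (r n))) \<longlonglongrightarrow> comb l"
    unfolding comb_def by (intro tendsto_sum tendsto_scaleR lim tendsto_const) auto
  then have "(\<lambda>n. norm (comb (y (r n)))) \<longlonglongrightarrow> norm (comb l)"
    by (rule tendsto_norm)
  moreover have "(\<lambda>n. norm (comb (y (r n)))) \<longlonglongrightarrow> 0"
  proof (rule tendsto_sandwich[where f = "\<lambda>_. 0" and h = "\<lambda>n. 1 / (real n + 1)"])
    have "norm (comb (y (r n))) \<le> 1 / (real n + 1)" for n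
    proof -
      have "1 / (real (r n) + 1) \<le> 1 / (real n + 1)"
        using seq_suble[OF r, of n] by (simp add: frac_le)
      then show ?thesis using y2[of "r n"] by linarith
    qed
    then show "\<forall>\<^sub>F n in sequentially. norm (comb (y (r n))) \<le> 1 / (real n + 1)"
      by simp
    show "(\<lambda>n. 1 / (real n + 1)) \<longlonglongrightarrow> 0"
      using LIMSEQ_inverse_real_of_nat by (simp add: inverse_eq_divide add.commute)
  qed simp_all
  ultimately have "norm (comb l) = 0"
    by (rule LIMSEQ_unique)
  then have "\<forall>i<d. l i = 0"
    using coords_unique unfolding comb_def by simp
  with l1 show False by simp
qed

lemma sets_coord_ball: "coord_ball a r \<in> sets coord_space"
proof -
  have "(\<lambda>x. x i) \<in> borel_measurable coord_space" for i
  proof (cases "i < d")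
    case True
    then show ?thesis
      using measurable_component_singleton[of i "{..<d}" "\<lambda>_. lborel"] by simp
  next
    case False
    then have "x \<in> space coord_space \<Longrightarrow> x i = undefined" for x
      by (auto simp: space_PiM PiE_def extensional_def)
    then show ?thesis
      by (subst measurable_cong[where g = "\<lambda>_. undefined"]) auto
  qed
  then have "(\<lambda>x. x) \<in> coord_space \<rightarrow>\<^sub>M PiM UNIV (\<lambda>_. borel :: real measure)"
    by (intro measurable_PiM_single') auto
  then have id: "(\<lambda>x. x) \<in> coord_space \<rightarrow>\<^sub>M (borel :: (nat \<Rightarrow> real) measure)"
    using measurable_cong_sets[OF refl sets_PiM_equal_borel] by blast
  have "continuous_on UNIV (\<lambda>x. norm (comb x - a))"
    unfolding comb_def by (intro continuous_intros continuous_on_product_coordinates)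
  then have "(\<lambda>x. norm (comb x - a)) \<in> borel_measurable borel"
    by (rule borel_measurable_continuous_onI)
  then have "(\<lambda>x. norm (comb x - a)) \<in> borel_measurable coord_space"
    using measurable_comp[OF id] by (simp add: o_def)
  then show ?thesis
    unfolding coord_ball_def by measurable
qed

lemma coord_balls_disjoint:
  assumes "r + r' \<le> norm (s - t)"
  shows "coord_ball s r \<inter> coord_ball t r' = {}"
proof (rule ccontr)
  assume "coord_ball s r \<inter> coord_ball t r' \<noteq> {}"
  then obtain x where "norm (comb x - s) < r" and "norm (comb x - t) < r'"
    unfolding coord_ball_def by auto
  then have "norm (s - t) < r + r'"
    using norm_triangle_ineq4[of "comb x - t" "comb x - s"] by (simp add: norm_minus_commute)
  with assms show False
    by simp
qed

lemma coord_ball_subset: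
  assumes "norm (s - t) + r \<le> r'"
  shows "coord_ball s r \<subseteq> coord_ball t r'"
proof
  fix x assume x: "x \<in> coord_ball s r"
  have "norm (comb x - t) \<le> norm (comb x - s) + norm (s - t)"
    using norm_triangle_ineq[of "comb x - s" "s - t"] by simp
  then show "x \<in> coord_ball t r'"
    using x assms unfolding coord_ball_def by simp
qed

lemma emeasure_coord_ball_translate:
  "emeasure coord_space (coord_ball a r) = emeasure coord_space (coord_ball 0 r)"
proof -
  obtain \<alpha> where \<alpha>: "a = comb \<alpha>"
    using coords_exist unfolding comb_def by blast
  have "comb (\<lambda>i\<in>{..<d}. - \<alpha> i + 1 * x i) = comb x - a" for x
    unfolding comb_def \<alpha> by (simp add: algebra_simps sum_subtractf)
  then have "(\<lambda>x. \<lambda>i\<in>{..<d}. - \<alpha> i + 1 * x i) -` coord_ball 0 r \<inter> space coord_space = coord_ball a r"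
    unfolding coord_ball_def by (auto simp: space_PiM)
  then show ?thesis
    using emeasure_PiM_lborel_affine_vimage[of "{..<d}" 1 "coord_ball 0 r" "\<lambda>i. - \<alpha> i"]
      sets_coord_ball by simp
qed

lemma emeasure_coord_ball_scale:
  assumes "c > 0"
  shows "emeasure coord_space (coord_ball 0 (c * r)) = ennreal (c ^ d) * emeasure coord_space (coord_ball 0 r)"
proof -
  have "comb (\<lambda>i\<in>{..<d}. 0 + c * x i) = c *\<^sub>R comb x" for x
    unfolding comb_def by (simp add: scaleR_sum_right)
  then have "(\<lambda>x. \<lambda>i\<in>{..<d}. 0 + c * x i) -` coord_ball 0 (c * r) \<inter> space coord_space = coord_ball 0 r"
    unfolding coord_ball_def using assms by (auto simp: space_PiM)
  then show ?thesis
    using emeasure_PiM_lborel_affine_vimage[of "{..<d}" c "coord_ball 0 (c * r)" "\<lambda>_. 0"]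
      sets_coord_ball assms by simp
qed

lemma emeasure_coord_ball_pos:
  assumes "r > 0"
  shows "emeasure coord_space (coord_ball 0 r) > 0"
proof -
  define \<sigma> where "\<sigma> = (\<Sum>i<d. norm (b i))"
  define \<delta> where "\<delta> = r / (\<sigma> + 1)"
  have \<sigma>: "\<sigma> \<ge> 0"
    unfolding \<sigma>_def by (simp add: sum_nonneg)
  then have \<delta>: "\<delta> > 0" and "\<delta> * \<sigma> < r"
    using assms by (simp_all add: \<delta>_def field_simps)
  have "PiE {..<d} (\<lambda>_. {-\<delta><..<\<delta>}) \<subseteq> coord_ball 0 r"
  proof
    fix x assume x: "x \<in> PiE {..<d} (\<lambda>_. {-\<delta><..<\<delta>})"
    have x_bound: "\<bar>x i\<bar> \<le> \<delta>" if "i < d" for i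
    proof -
      have "x i \<in> {-\<delta><..<\<delta>}"
        using x that by (simp add: PiE_iff)
      then show ?thesis
        by (simp add: abs_le_iff)
    qed
    have "norm (comb x) \<le> (\<Sum>i<d. \<bar>x i\<bar> * norm (b i))"
      unfolding comb_def by (rule order_trans[OF norm_sum]) simp
    also have "\<dots> \<le> (\<Sum>i<d. \<delta> * norm (b i))"
      using x_bound by (intro sum_mono mult_right_mono) auto
    also have "\<dots> = \<delta> * \<sigma>"
      by (simp add: \<sigma>_def sum_distrib_left)
    finally have "norm (comb x) < r"
      using \<open>\<delta> * \<sigma> < r\<close> by linarith
    then show "x \<in> coord_ball 0 r"
      using x unfolding coord_ball_def by (auto simp: space_PiM PiE_iff)
  qed
  then have "emeasure coord_space (PiE {..<d} (\<lambda>_. {-\<delta><..<\<delta>})) \<le> emeasure coord_space (coord_ball 0 r)"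
    using sets_coord_ball by (rule emeasure_mono)
  moreover have "emeasure coord_space (PiE {..<d} (\<lambda>_. {-\<delta><..<\<delta>})) = (\<Prod>i<d. emeasure lborel {-\<delta><..<\<delta>})"
    by (rule lborel_product.emeasure_PiM) simp_all
  moreover have "(\<Prod>i<d. emeasure lborel {-\<delta><..<\<delta>}) > 0"
    using \<delta> by (simp add: ennreal_power)
  ultimately show ?thesis
    by order
qed

lemma emeasure_coord_ball_finite: "emeasure coord_space (coord_ball 0 r) < \<infinity>"
proof -
  obtain m where m: "m > 0" and bound: "\<And>x. m * (\<Sum>i<d. \<bar>x i\<bar>) \<le> norm (comb x)"
    using comb_bounded_below by blast
  define R where "R = \<bar>r\<bar> / m"
  have R: "R \<ge> 0"
    using m unfolding R_def by simp
  have "coord_ball 0 r \<subseteq> PiE {..<d} (\<lambda>_. {-R..R})"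
  proof
    fix x assume x: "x \<in> coord_ball 0 r"
    then have x_space: "x \<in> space coord_space" and x_norm: "norm (comb x) < r"
      unfolding coord_ball_def by simp_all
    have "x i \<in> {-R..R}" if "i < d" for i
    proof -
      have "m * \<bar>x i\<bar> \<le> m * (\<Sum>i<d. \<bar>x i\<bar>)"
        using that m by (intro mult_left_mono member_le_sum) auto
      also have "\<dots> \<le> \<bar>r\<bar>"
        using bound[of x] x_norm by linarith
      finally have "\<bar>x i\<bar> \<le> R"
        using m unfolding R_def by (simp add: pos_le_divide_eq mult.commute)
      then show ?thesis
        by (simp add: abs_le_iff)
    qed
    then show "x \<in> PiE {..<d} (\<lambda>_. {-R..R})"
      using x_space by (simp add: space_PiM PiE_iff)
  qed
  moreover have "PiE {..<d} (\<lambda>_. {-R..R}) \<in> sets coord_space"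
    by (rule sets_PiM_I_finite) simp_all
  ultimately have "emeasure coord_space (coord_ball 0 r) \<le> emeasure coord_space (PiE {..<d} (\<lambda>_. {-R..R}))"
    by (rule emeasure_mono)
  also have "\<dots> = (\<Prod>i<d. emeasure lborel {-R..R})"
    by (rule lborel_product.emeasure_PiM) simp_all
  also have "\<dots> < \<infinity>"
    using R by (simp add: ennreal_power)
  finally show ?thesis .
qed

lemma card_packing_le_pow5:
  fixes S :: "'a set"
  assumes S: "finite S" and small: "\<And>s. s \<in> S \<Longrightarrow> norm s \<le> 2"
    and sep: "\<And>s t. s \<in> S \<Longrightarrow> t \<in> S \<Longrightarrow> s \<noteq> t \<Longrightarrow> 1 \<le> norm (s - t)"
  shows "card S \<le> 5 ^ d"
proof -
  let ?\<mu> = "emeasure coord_space"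
  have "disjoint_family_on (\<lambda>s. coord_ball s (1/2)) S"
    unfolding disjoint_family_on_def using sep by (intro ballI impI coord_balls_disjoint) simp
  then have "?\<mu> (\<Union>s\<in>S. coord_ball s (1/2)) = (\<Sum>s\<in>S. ?\<mu> (coord_ball s (1/2)))"
    using S sets_coord_ball by (intro sum_emeasure[symmetric]) auto
  also have "\<dots> = (\<Sum>s\<in>S. ?\<mu> (coord_ball 0 (1/2)))"
    by (rule sum.cong[OF refl emeasure_coord_ball_translate])
  also have "\<dots> = of_nat (card S) * ?\<mu> (coord_ball 0 (1/2))"
    by simp
  finally have union_eq: "?\<mu> (\<Union>s\<in>S. coord_ball s (1/2)) = of_nat (card S) * ?\<mu> (coord_ball 0 (1/2))" .
  have "(\<Union>s\<in>S. coord_ball s (1/2)) \<subseteq> coord_ball 0 (5 * (1/2))"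
    using small by (intro UN_least coord_ball_subset) simp
  then have "?\<mu> (\<Union>s\<in>S. coord_ball s (1/2)) \<le> ?\<mu> (coord_ball 0 (5 * (1/2)))"
    using sets_coord_ball by (rule emeasure_mono)
  also have "\<dots> = ennreal (5 ^ d) * ?\<mu> (coord_ball 0 (1/2))"
    by (rule emeasure_coord_ball_scale) simp
  finally have "of_nat (card S) * ?\<mu> (coord_ball 0 (1/2)) \<le> ennreal (5 ^ d) * ?\<mu> (coord_ball 0 (1/2))"
    unfolding union_eq .
  moreover obtain q where "?\<mu> (coord_ball 0 (1/2)) = ennreal q" and "q > 0"
    using emeasure_coord_ball_pos[of "1/2"] emeasure_coord_ball_finite[of "1/2"]
    by (cases "?\<mu> (coord_ball 0 (1/2))") auto
  ultimately have "real (card S) * q \<le> 5 ^ d * q"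
    by (simp add: ennreal_of_nat_eq_real_of_nat ennreal_mult'[symmetric])
  then have "real (card S) \<le> 5 ^ d"
    using \<open>q > 0\<close> by simp
  then show ?thesis
    by (simp add: of_nat_le_iff[symmetric])
qed

lemma theta_configs_card_le_pow5:
  fixes S :: "'a set"
  assumes "S \<in> theta_configs"
  shows "card S \<le> 5 ^ d"
  using assms card_packing_le_pow5 unfolding theta_configs_def closed_ball_def by auto

lemma card_le_theta:
  fixes S :: "'a set"
  assumes "S \<in> theta_configs"
  shows "card S \<le> theta TYPE('a)"
  unfolding theta_eq_Sup using assms theta_configs_card_le_pow5
  by (intro cSup_upper bdd_aboveI) auto

lemma theta_le_pow5: "theta TYPE('a) \<le> 5 ^ d"
  unfolding theta_eq_Sup using zero_in_theta_configs theta_configs_card_le_pow5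
  by (intro cSup_least) auto

lemma card_le_theta_image:
  fixes f :: "'i \<Rightarrow> 'a"
  assumes "finite A" and "a \<in> A" and "f a = 0" and "\<And>p. p \<in> A \<Longrightarrow> norm (f p) \<le> 2"
    and sep: "\<And>p q. p \<in> A \<Longrightarrow> q \<in> A \<Longrightarrow> p \<noteq> q \<Longrightarrow> 1 \<le> norm (f p - f q)"
  shows "card A \<le> theta TYPE('a)"
proof -
  have "inj_on f A"
  proof (rule inj_onI, rule ccontr)
    fix p q assume "p \<in> A" "q \<in> A" "f p = f q" "p \<noteq> q"
    then show False
      using sep[of p q] by simp
  qed
  moreover have "f ` A \<in> theta_configs"
    using assms unfolding theta_configs_def closed_ball_def by (auto simp: image_iff)
  ultimately show ?thesis
    using card_le_theta card_image by metis
qed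

lemma card_le_theta_rescaled:
  fixes x :: "nat \<Rightarrow> 'a" and \<rho> :: "nat \<Rightarrow> real"
  assumes "finite P" and "\<rho> j > 0"
    and far: "\<forall>p\<in>P. \<rho> j \<le> norm (x p - x j)"
    and close: "\<forall>p\<in>P. norm (x p - x j) \<le> \<rho> p + \<rho> j"
    and larger: "\<forall>p\<in>P. \<rho> j \<le> \<rho> p"
    and separated: "pairwise (\<lambda>p q. max (\<rho> p) (\<rho> q) \<le> norm (x p - x q)) P"
  shows "card (insert j P) \<le> theta TYPE('a)"
proof -
  define f where "f p = (if p = j then 0 else radial_retract ((1 / \<rho> j) *\<^sub>R (x p - x j)))" for p
  have "j \<notin> P"
    using far \<open>\<rho> j > 0\<close> by force
  then have f_P: "f p = radial_retract ((1 / \<rho> j) *\<^sub>R (x p - x j))" if "p \<in> P" for p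
    using that unfolding f_def by auto
  have f_j: "f j = 0"
    unfolding f_def by simp
  have norm_f: "1 \<le> norm (f p)" if "p \<in> P" for p
  proof -
    have "1 \<le> norm ((1 / \<rho> j) *\<^sub>R (x p - x j))"
      using that far \<open>\<rho> j > 0\<close> by (simp add: le_divide_eq)
    then show ?thesis
      using that by (simp add: f_P norm_radial_retract_ge)
  qed
  show ?thesis
  proof (rule card_le_theta_image[of _ j f])
    show "norm (f p) \<le> 2" for p
      by (simp add: f_def norm_radial_retract_le)
    fix p q assume pq: "p \<in> insert j P" "q \<in> insert j P" "p \<noteq> q"
    consider "p = j" "q \<in> P" | "q = j" "p \<in> P" | "p \<in> P" "q \<in> P"
      using pq by auto
    then show "1 \<le> norm (f p - f q)"
    proof cases
      case 1
      then show ?thesis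
        using norm_f[of q] by (simp add: f_j norm_minus_commute)
    next
      case 2
      then show ?thesis
        using norm_f[of p] by (simp add: f_j)
    next
      case 3
      have "max (\<rho> p) (\<rho> q) \<le> norm ((x p - x j) - (x q - x j))"
        using separated 3 \<open>p \<noteq> q\<close> by (simp add: pairwise_def)
      then have "1 \<le> norm (radial_retract ((1 / \<rho> j) *\<^sub>R (x p - x j)) -
          radial_retract ((1 / \<rho> j) *\<^sub>R (x q - x j)))"
        using 3 \<open>\<rho> j > 0\<close> close larger
        by (intro radial_retract_rescaled_separated) auto
      then show ?thesis
        using 3 by (simp add: f_P)
    qed
  qed (use \<open>finite P\<close> f_j in auto)
qed

lemma card_soi_up_neighbours_le:
  fixes c :: "nat \<Rightarrow> 'a"
  assumes "inj_on c {1..n}" and "k \<ge> 1" and "n \<ge> k + 1" and "j \<in> {1..n}"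
  shows "card (soi_up_neighbours k n c j) + 1 \<le> k * theta TYPE('a)"
proof -
  define R where "R = soi_radius k n c"
  define M where "M = soi_up_neighbours k n c j"
  define nbhd where "nbhd p = {q \<in> {1..n}. q \<noteq> p \<and> norm (c p - c q) < R p}" for p
  have M: "finite M" "M \<subseteq> {1..n}" "j \<notin> M"
    unfolding M_def soi_up_neighbours_def soi_adj_def by auto
  obtain P where P: "P \<subseteq> M" "\<forall>p\<in>P. R j \<le> norm (c p - c j)"
    "pairwise (\<lambda>p q. max (R p) (R q) \<le> norm (c p - c q)) P"
    "M \<subseteq> (\<Union>p\<in>insert j P. insert p (nbhd p))"
    using greedy_separated_cover[OF M, where x = c and \<rho> = R] unfolding nbhd_def by blast
  have "finite P"
    using P(1) M(1) finite_subset by blast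
  have "card (insert j M) \<le> card (\<Union>p\<in>insert j P. insert p (nbhd p))"
    using P(4) \<open>finite P\<close> by (intro card_mono) (auto simp: nbhd_def)
  also have "\<dots> \<le> (\<Sum>p\<in>insert j P. card (insert p (nbhd p)))"
    using \<open>finite P\<close> by (intro card_UN_le) simp
  also have "\<dots> \<le> (\<Sum>p\<in>insert j P. k)"
  proof (rule sum_mono)
    fix p assume "p \<in> insert j P"
    have "card (nbhd p) < k"
      using card_inside_soi_radius_less[OF \<open>k \<ge> 1\<close>] unfolding nbhd_def R_def by simp
    then show "card (insert p (nbhd p)) \<le> k"
      by (simp add: card_insert_if nbhd_def)
  qed
  also have "\<dots> \<le> k * theta TYPE('a)"
  proof -
    have "\<forall>p\<in>P. R j \<le> R p \<and> norm (c p - c j) \<le> R p + R j"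
      using P(1) soi_adj_norm_le unfolding M_def soi_up_neighbours_def R_def by blast
    then have "card (insert j P) \<le> theta TYPE('a)"
      using \<open>finite P\<close> P(2,3) soi_radius_pos[OF assms] unfolding R_def
      by (intro card_le_theta_rescaled) auto
    then show ?thesis
      by simp
  qed
  finally show ?thesis
    using M by (simp add: M_def)
qed

lemma card_soi_edges_le:
  fixes c :: "nat \<Rightarrow> 'a"
  assumes "inj_on c {1..n}" and "k \<ge> 1" and "n \<ge> k + 1"
  shows "card (soi_edges k n c) + n \<le> n * (k * theta TYPE('a))"
proof -
  have "card (soi_edges k n c) + n \<le> (\<Sum>j\<in>{1..n}. card (soi_up_neighbours k n c j)) + n"
    using card_soi_edges_le_sum[of k n c] by simp
  also have "\<dots> = (\<Sum>j\<in>{1..n}. card (soi_up_neighbours k n c j) + 1)"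
    unfolding sum.distrib by simp
  also have "\<dots> \<le> (\<Sum>j\<in>{1..n}. k * theta TYPE('a))"
    using card_soi_up_neighbours_le[OF assms] by (rule sum_mono)
  finally show ?thesis
    by simp
qed

end

lemma coordinates_of_basis:
  fixes B :: "'a::real_normed_vector set"
  assumes "finite B" and "independent B" and "span B = UNIV" and "card B = d"
  obtains b :: "nat \<Rightarrow> 'a" where "coordinates b d"
proof -
  obtain b where b: "bij_betw b {..<d} B"
    using ex_bij_betw_nat_finite[OF assms(1)] assms(4) by (auto simp: atLeast0LessThan)
  have reindex: "(\<Sum>v\<in>B. g v) = (\<Sum>i<d. g (b i))" for g :: "'a \<Rightarrow> 'a"
    using sum.reindex_bij_betw[OF b, of g] by simp
  have "\<forall>i<d. x i = 0" if x: "(\<Sum>i<d. x i *\<^sub>R b i) = 0" for x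
  proof (intro allI impI)
    fix i assume i: "i < d"
    define u where "u v = x (inv_into {..<d} b v)" for v
    have u: "u (b j) = x j" if "j < d" for j
      unfolding u_def using b that by (simp add: bij_betw_inv_into_left)
    have "(\<Sum>v\<in>B. u v *\<^sub>R v) = (\<Sum>j<d. x j *\<^sub>R b j)"
      unfolding reindex by (intro sum.cong) (auto simp: u)
    then have "u (b i) = 0"
      using x i b real_vector.independentD[OF assms(2,1) order_refl]
      by (auto simp: bij_betw_def)
    then show "x i = 0"
      using u[OF i] by simp
  qed
  moreover have "\<exists>x. v = (\<Sum>i<d. x i *\<^sub>R b i)" for v
  proof -
    obtain u where "v = (\<Sum>w\<in>B. u w *\<^sub>R w)"
      using real_vector.span_finite[OF assms(1)] assms(3) by auto
    then have "v = (\<Sum>i<d. (u \<circ> b) i *\<^sub>R b i)"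
      by (simp add: reindex)
    then show ?thesis
      by blast
  qed
  ultimately show ?thesis
    using that[of b] unfolding coordinates_def by blast
qed

theorem mainTheorem2:
  fixes B :: "'a::real_normed_vector set" and d k n :: nat and c :: "nat \<Rightarrow> 'a"
  assumes "finite B" and "independent B" and "span B = UNIV" and "card B = d"
    and "k \<ge> 1"
    and "n \<ge> k + 1"
    and "inj_on c {1..n}"
  shows "int (card (soi_edges k n c)) \<le> (int (theta TYPE('a)) * int k - 1) * int n
       \<and> (int (theta TYPE('a)) * int k - 1) * int n \<le> (5 ^ d * int k - 1) * int n"
proof -
  obtain b :: "nat \<Rightarrow> 'a" where "coordinates b d"
    using coordinates_of_basis[OF assms(1-4)] .
  then interpret coordinates b d .
  have "card (soi_edges k n c) + n \<le> n * (k * theta TYPE('a))"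
    using assms(7,5,6) by (rule card_soi_edges_le)
  then have "int (card (soi_edges k n c)) + int n \<le> int n * (int k * int (theta TYPE('a)))"
    by (metis of_nat_add of_nat_le_iff of_nat_mult)
  then have "int (card (soi_edges k n c)) \<le> (int (theta TYPE('a)) * int k - 1) * int n"
    by (simp add: algebra_simps)
  moreover have "int (theta TYPE('a)) * int k \<le> 5 ^ d * int k"
    using theta_le_pow5 by (intro mult_right_mono) (simp_all flip: of_nat_le_iff)
  then have "(int (theta TYPE('a)) * int k - 1) * int n \<le> (5 ^ d * int k - 1) * int n"
    by (intro mult_right_mono) simp_all
  ultimately show ?thesis ..
qed

end
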